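(* Let $G$ be a prime $\{P_5,\overline{P_5}\}$-free graph and $v\in V(G)$. (1) If $v$ is antisimplicial and $u$ is a vertex non-adjacent to $v$ chosen so that $|N(u)\cap N(v)|$ is minimum among all vertices non-adjacent to $v$, then $u$ is simplicial. (2) If $v$ is simplicial and $u$ is a vertex adjacent to $v$ chosen so that $|N(u)\cup N(v)|$ is maximum among all neighbors of $v$, then $u$ is antisimplicial.
   Context: All graphs are finite and simple. $N(x)$ is the set of neighbors of $x$. $P_5$ is the path on five vertices and $\overline{P_5}$ its complement; $G$ is $H$-free if it has no induced subgraph isomorphic to $H$. A vertex $b\notin X$ is mixed on $X$ if it has both a neighbor and a non-neighbor in $X$. A homogeneous set is a set $X\subseteq V(G)$ with $1<|X|<|V(G)|$ such that no vertex outside $X$ is mixed on $X$. $G$ is prime if $|V(G)|\ge4$ and has no homogeneous set. A vertex $v$ is simplicial if $N(v)$ is a clique, antisimplicial if $V(G)\setminus N(v)$ is a stable set. *)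

theory Defs
  imports Main
begin

definition graph :: "'a set \<Rightarrow> ('a \<Rightarrow> 'a \<Rightarrow> bool) \<Rightarrow> bool" where
  "graph V E \<longleftrightarrow> finite V \<and> (\<forall>x y. E x y \<longrightarrow> x \<in> V \<and> y \<in> V)
     \<and> (\<forall>x y. E x y \<longrightarrow> E y x) \<and> (\<forall>x. \<not> E x x)"

definition nbhd :: "'a set \<Rightarrow> ('a \<Rightarrow> 'a \<Rightarrow> bool) \<Rightarrow> 'a \<Rightarrow> 'a set" where
  "nbhd V E x = {y \<in> V. E x y}"

definition has_induced_P5 :: "'a set \<Rightarrow> ('a \<Rightarrow> 'a \<Rightarrow> bool) \<Rightarrow> bool" where
  "has_induced_P5 V E \<longleftrightarrow> (\<exists>a\<in>V. \<exists>b\<in>V. \<exists>c\<in>V. \<exists>d\<in>V. \<exists>e\<in>V.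
     distinct [a, b, c, d, e] \<and>
     E a b \<and> E b c \<and> E c d \<and> E d e \<and>
     \<not> E a c \<and> \<not> E a d \<and> \<not> E a e \<and> \<not> E b d \<and> \<not> E b e \<and> \<not> E c e)"

definition has_induced_coP5 :: "'a set \<Rightarrow> ('a \<Rightarrow> 'a \<Rightarrow> bool) \<Rightarrow> bool" where
  "has_induced_coP5 V E \<longleftrightarrow> (\<exists>a\<in>V. \<exists>b\<in>V. \<exists>c\<in>V. \<exists>d\<in>V. \<exists>e\<in>V.
     distinct [a, b, c, d, e] \<and>
     \<not> E a b \<and> \<not> E b c \<and> \<not> E c d \<and> \<not> E d e \<and>
     E a c \<and> E a d \<and> E a e \<and> E b d \<and> E b e \<and> E c e)"

definition mixed :: "'a set \<Rightarrow> ('a \<Rightarrow> 'a \<Rightarrow> bool) \<Rightarrow> 'a \<Rightarrow> 'a set \<Rightarrow> bool" where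
  "mixed V E b X \<longleftrightarrow> b \<notin> X \<and> (\<exists>x\<in>X. E b x) \<and> (\<exists>y\<in>X. \<not> E b y)"

definition homogeneous :: "'a set \<Rightarrow> ('a \<Rightarrow> 'a \<Rightarrow> bool) \<Rightarrow> 'a set \<Rightarrow> bool" where
  "homogeneous V E X \<longleftrightarrow> X \<subseteq> V \<and> 1 < card X \<and> card X < card V \<and>
     (\<forall>b\<in>V - X. \<not> mixed V E b X)"

definition prime_graph :: "'a set \<Rightarrow> ('a \<Rightarrow> 'a \<Rightarrow> bool) \<Rightarrow> bool" where
  "prime_graph V E \<longleftrightarrow> card V \<ge> 4 \<and> \<not> (\<exists>X. homogeneous V E X)"

definition simplicial :: "'a set \<Rightarrow> ('a \<Rightarrow> 'a \<Rightarrow> bool) \<Rightarrow> 'a \<Rightarrow> bool" where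
  "simplicial V E v \<longleftrightarrow> (\<forall>x\<in>nbhd V E v. \<forall>y\<in>nbhd V E v. x \<noteq> y \<longrightarrow> E x y)"

definition antisimplicial :: "'a set \<Rightarrow> ('a \<Rightarrow> 'a \<Rightarrow> bool) \<Rightarrow> 'a \<Rightarrow> bool" where
  "antisimplicial V E v \<longleftrightarrow> (\<forall>x\<in>V - nbhd V E v. \<forall>y\<in>V - nbhd V E v. \<not> E x y)"

end

theory Submission
  imports Defs
begin

text \<open>Part (1): since \<open>v\<close> is antisimplicial, every non-neighbour \<open>w\<close> of \<open>v\<close> has
  \<open>N(w) \<subseteq> N(v)\<close>, so \<open>u\<close> minimises \<open>|N(u)|\<close> among them. If \<open>N(u)\<close> were not a clique, the
  component \<open>K\<close> of the complement of \<open>G[N(u)]\<close> containing a non-edge would be a homogeneous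
  set: \<open>u\<close>, \<open>v\<close> and the rest of \<open>N(u)\<close> are complete to \<open>K\<close>; a vertex \<open>b \<in> N(v) - N(u)\<close>
  mixed on a non-edge \<open>pq\<close> of \<open>K\<close> yields a house (co-\<open>P\<^sub>5\<close>) on \<open>v, u, b, q, p\<close>; and a
  non-neighbour \<open>b\<close> of \<open>v\<close> mixed on \<open>pq\<close> has, by minimality, a neighbour
  \<open>z \<in> N(v) - N(u)\<close>, which gives either a \<open>P\<^sub>5\<close> \<open>u q v z b\<close> or a house \<open>z u b q p\<close>.
  Part (2) is part (1) in the complement graph, which is again prime and
  \<open>{P\<^sub>5, co-P\<^sub>5}\<close>-free, with simplicial and antisimplicial vertices exchanged.\<close>

lemma graph_finite: "graph V E \<Longrightarrow> finite V"
  unfolding graph_def by blast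

lemma graph_vertices: "graph V E \<Longrightarrow> E x y \<Longrightarrow> x \<in> V \<and> y \<in> V"
  unfolding graph_def by blast

lemma graph_sym: "graph V E \<Longrightarrow> E x y \<Longrightarrow> E y x"
  unfolding graph_def by blast

lemma graph_irrefl: "graph V E \<Longrightarrow> \<not> E x x"
  unfolding graph_def by blast

lemma finite_nbhd: "graph V E \<Longrightarrow> finite (nbhd V E x)"
  unfolding nbhd_def by (simp add: graph_finite)

lemma induced_P5I:
  assumes "a \<in> V" "b \<in> V" "c \<in> V" "d \<in> V" "e \<in> V" "distinct [a, b, c, d, e]"
    "E a b" "E b c" "E c d" "E d e"
    "\<not> E a c" "\<not> E a d" "\<not> E a e" "\<not> E b d" "\<not> E b e" "\<not> E c e"
  shows "has_induced_P5 V E"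
  unfolding has_induced_P5_def using assms by blast

lemma induced_coP5I:
  assumes "a \<in> V" "b \<in> V" "c \<in> V" "d \<in> V" "e \<in> V" "distinct [a, b, c, d, e]"
    "\<not> E a b" "\<not> E b c" "\<not> E c d" "\<not> E d e"
    "E a c" "E a d" "E a e" "E b d" "E b e" "E c e"
  shows "has_induced_coP5 V E"
  unfolding has_induced_coP5_def using assms by blast

lemma prime_graph_mixed_vertex:
  assumes "graph V E" "prime_graph V E" "X \<subseteq> V" "1 < card X" "u \<in> V - X"
  shows "\<exists>b\<in>V - X. mixed V E b X"
proof -
  have "card X < card V"
    using assms by (intro psubset_card_mono) (auto simp: graph_finite)
  then show ?thesis
    using assms unfolding prime_graph_def homogeneous_def by blast
qed

definition antiadjacent :: "('a \<Rightarrow> 'a \<Rightarrow> bool) \<Rightarrow> 'a set \<Rightarrow> 'a \<Rightarrow> 'a \<Rightarrow> bool" where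
  "antiadjacent E S p q \<longleftrightarrow> p \<in> S \<and> q \<in> S \<and> p \<noteq> q \<and> \<not> E p q"

definition anticomponent :: "('a \<Rightarrow> 'a \<Rightarrow> bool) \<Rightarrow> 'a set \<Rightarrow> 'a \<Rightarrow> 'a set" where
  "anticomponent E S x = {w. (antiadjacent E S)\<^sup>*\<^sup>* x w}"

lemma anticomponent_self: "x \<in> anticomponent E S x"
  unfolding anticomponent_def by simp

lemma anticomponent_subset:
  assumes "x \<in> S"
  shows "anticomponent E S x \<subseteq> S"
proof
  fix w
  assume "w \<in> anticomponent E S x"
  then have "(antiadjacent E S)\<^sup>*\<^sup>* x w"
    unfolding anticomponent_def by simp
  then show "w \<in> S"
    by (cases rule: rtranclp.cases) (auto simp: assms antiadjacent_def)
qed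

lemma anticomponent_antiadjacent:
  "w \<in> anticomponent E S x \<Longrightarrow> antiadjacent E S w y \<Longrightarrow> y \<in> anticomponent E S x"
  unfolding anticomponent_def by (simp add: rtranclp.rtrancl_into_rtrancl)

lemma anticomponent_complete:
  assumes "x \<in> S" "w \<in> anticomponent E S x" "b \<in> S - anticomponent E S x"
  shows "E w b"
proof (rule ccontr)
  assume "\<not> E w b"
  moreover have "w \<in> S"
    using anticomponent_subset[OF assms(1)] assms(2) by blast
  moreover have "w \<noteq> b"
    using assms(2,3) by blast
  ultimately have "antiadjacent E S w b"
    using assms(3) unfolding antiadjacent_def by blast
  then have "b \<in> anticomponent E S x"
    by (rule anticomponent_antiadjacent[OF assms(2)])
  with assms(3) show False
    by blast
qed

lemma anticomponent_uniform:
  assumes "graph V E" "w \<in> anticomponent E S x"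
    and transfer: "\<And>p q. antiadjacent E S p q \<Longrightarrow> E b p \<Longrightarrow> E b q"
  shows "E b w \<longleftrightarrow> E b x"
proof -
  have "(antiadjacent E S)\<^sup>*\<^sup>* x w"
    using assms(2) unfolding anticomponent_def by simp
  then show ?thesis
  proof induction
    case (step w w')
    then have "antiadjacent E S w' w"
      using graph_sym[OF assms(1)] unfolding antiadjacent_def by blast
    then show ?case
      using step transfer by blast
  qed simp
qed

lemma anticomponent_not_mixed:
  assumes "graph V E" "\<And>p q. antiadjacent E S p q \<Longrightarrow> E b p \<Longrightarrow> E b q"
  shows "\<not> mixed V E b (anticomponent E S x)"
proof -
  have "E b w \<longleftrightarrow> E b x" if "w \<in> anticomponent E S x" for w
    by (rule anticomponent_uniform[OF assms(1) that]) (fact assms(2))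
  then show ?thesis
    unfolding mixed_def by blast
qed

lemma antisimplicial_nonadjacent:
  "antisimplicial V E v \<Longrightarrow> x \<in> V \<Longrightarrow> y \<in> V \<Longrightarrow> \<not> E v x \<Longrightarrow> \<not> E v y \<Longrightarrow> \<not> E x y"
  unfolding antisimplicial_def nbhd_def by blast

lemma antisimplicial_nonneighbour_nbhd:
  assumes G: "graph V E" and "antisimplicial V E v" "w \<in> V" "\<not> E w v"
  shows "nbhd V E w \<subseteq> nbhd V E v"
proof
  fix y
  assume "y \<in> nbhd V E w"
  then have "y \<in> V" "E w y"
    by (auto simp: nbhd_def)
  moreover have "\<not> E v w"
    using assms graph_sym[OF G, of v w] by blast
  ultimately show "y \<in> nbhd V E v"
    using antisimplicial_nonadjacent[OF assms(2,3)] unfolding nbhd_def by blast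
qed

lemma house_free_transfer:
  assumes G: "graph V E" and coP5: "\<not> has_induced_coP5 V E"
    and "u \<in> V" "v \<in> V" "\<not> E u v"
    and p: "p \<in> nbhd V E u \<inter> nbhd V E v" and q: "q \<in> nbhd V E u \<inter> nbhd V E v"
    and "p \<noteq> q" "\<not> E p q"
    and b: "b \<in> nbhd V E v - nbhd V E u" and "E b p"
  shows "E b q"
proof (rule ccontr)
  assume "\<not> E b q"
  moreover have "E u p" "E u q" "E v p" "E v q" "E v b" "\<not> E u b" "p \<in> V" "q \<in> V" "b \<in> V"
    using p q b by (auto simp: nbhd_def)
  moreover have "u \<noteq> v" "u \<noteq> p" "u \<noteq> q" "u \<noteq> b" "v \<noteq> p" "v \<noteq> q" "v \<noteq> b" "p \<noteq> b" "b \<noteq> q"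
    using calculation \<open>E b p\<close> \<open>\<not> E u v\<close> graph_irrefl[OF G] by auto
  moreover have "\<not> E v u" "\<not> E q p"
    using \<open>\<not> E u v\<close> \<open>\<not> E p q\<close> graph_sym[OF G, of v u] graph_sym[OF G, of q p] by blast+
  ultimately show False
    using assms induced_coP5I[where V = V and E = E and a = v and b = u and c = b and d = q and e = p]
    by simp
qed

lemma antisimplicial_min_nonneighbour_transfer:
  assumes G: "graph V E" and P5: "\<not> has_induced_P5 V E" and coP5: "\<not> has_induced_coP5 V E"
    and anti: "antisimplicial V E v" and V: "v \<in> V" "u \<in> V" "b \<in> V"
    and uv: "\<not> E u v" and bv: "\<not> E b v"
    and min: "card (nbhd V E u) \<le> card (nbhd V E b)"
    and p: "p \<in> nbhd V E u" and q: "q \<in> nbhd V E u" and pq: "p \<noteq> q" "\<not> E p q"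
    and bp: "E b p"
  shows "E b q"
proof (rule ccontr)
  assume bq: "\<not> E b q"
  have Nu: "nbhd V E u \<subseteq> nbhd V E v" and Nb: "nbhd V E b \<subseteq> nbhd V E v"
    using antisimplicial_nonneighbour_nbhd[OF G anti] V uv bv by blast+
  have "\<not> nbhd V E b \<subset> nbhd V E u"
    using psubset_card_mono[OF finite_nbhd[OF G, of u], of "nbhd V E b"] min by linarith
  moreover have "q \<notin> nbhd V E b"
    using bq by (simp add: nbhd_def)
  ultimately obtain z where zb: "z \<in> nbhd V E b" and zu: "z \<notin> nbhd V E u"
    using q by blast
  have vu: "\<not> E v u" and vb: "\<not> E v b"
    using uv bv graph_sym[OF G, of v u] graph_sym[OF G, of v b] by blast+
  have ub: "\<not> E u b"
    using antisimplicial_nonadjacent[OF anti] V vu vb by blast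
  have pv: "p \<in> nbhd V E v" and qv: "q \<in> nbhd V E v" and zv: "z \<in> nbhd V E v"
    using Nu Nb p q zb by auto
  have adj: "E u p" "E u q" "E q v" "E v z" "E b z" "E z b"
    "\<not> E u z" "\<not> E z u" "\<not> E q b" "\<not> E q p"
    using p q qv zv zb zu bq pq graph_sym[OF G, of v q] graph_sym[OF G, of b z]
      graph_sym[OF G, of z u] graph_sym[OF G, of q b] graph_sym[OF G, of q p]
    by (auto simp: nbhd_def)
  have inV: "p \<in> V" "q \<in> V" "z \<in> V"
    using p q zb by (auto simp: nbhd_def)
  have zq: "E z q"
  proof (rule ccontr)
    assume zq: "\<not> E z q"
    then have "\<not> E q z"
      using graph_sym[OF G, of q z] by blast
    moreover have "u \<noteq> v" "u \<noteq> q" "u \<noteq> z" "u \<noteq> b" "q \<noteq> v" "q \<noteq> z" "q \<noteq> b" "v \<noteq> z"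
      "v \<noteq> b" "z \<noteq> b"
      using adj uv zq bq ub graph_irrefl[OF G] by auto
    ultimately show False
      using P5 V inV adj uv ub vb
        induced_P5I[where V = V and E = E and a = u and b = q and c = v and d = z and e = b] by simp
  qed
  have zp: "E z p"
    using house_free_transfer[OF G coP5 V(2,1) uv, where p = q and q = p and b = z]
      p q pv qv pq zv zu zq graph_sym[OF G, of q p] by blast
  have "z \<noteq> u" "z \<noteq> b" "z \<noteq> q" "z \<noteq> p" "u \<noteq> b" "u \<noteq> q" "u \<noteq> p" "b \<noteq> q" "b \<noteq> p"
    using adj zp zq bp bq ub graph_irrefl[OF G] by auto
  then show False
    using coP5 V inV adj zp zq bq ub pq bp
      induced_coP5I[where V = V and E = E and a = z and b = u and c = b and d = q and e = p] by simp
qed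

lemma antisimplicial_min_nonneighbour_simplicial:
  assumes G: "graph V E" and prime: "prime_graph V E"
    and P5: "\<not> has_induced_P5 V E" and coP5: "\<not> has_induced_coP5 V E"
    and anti: "antisimplicial V E v" and V: "v \<in> V" "u \<in> V" and uv: "\<not> E u v"
    and min: "\<And>w. w \<in> V \<Longrightarrow> w \<noteq> v \<Longrightarrow> \<not> E w v \<Longrightarrow>
      card (nbhd V E u \<inter> nbhd V E v) \<le> card (nbhd V E w \<inter> nbhd V E v)"
  shows "simplicial V E u"
proof (rule ccontr)
  assume "\<not> simplicial V E u"
  then obtain x y where x: "x \<in> nbhd V E u" and y: "y \<in> nbhd V E u" and "x \<noteq> y" "\<not> E x y"
    unfolding simplicial_def by blast
  define K where "K = anticomponent E (nbhd V E u) x"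
  have Nu: "nbhd V E u \<subseteq> nbhd V E v"
    by (rule antisimplicial_nonneighbour_nbhd[OF G anti V(2) uv])
  have KN: "K \<subseteq> nbhd V E u"
    unfolding K_def by (rule anticomponent_subset[OF x])
  then have KV: "K \<subseteq> V"
    by (auto simp: nbhd_def)
  have "antiadjacent E (nbhd V E u) x y"
    using x y \<open>x \<noteq> y\<close> \<open>\<not> E x y\<close> unfolding antiadjacent_def by blast
  then have "y \<in> K"
    unfolding K_def by (rule anticomponent_antiadjacent[OF anticomponent_self])
  then have "{x, y} \<subseteq> K"
    by (simp add: K_def anticomponent_self)
  then have "card {x, y} \<le> card K"
    using card_mono finite_subset[OF KV graph_finite[OF G]] by blast
  then have "1 < card K"
    using \<open>x \<noteq> y\<close> by simp
  moreover have "u \<in> V - K"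
    using KN V graph_irrefl[OF G] by (auto simp: nbhd_def)
  ultimately obtain b where b: "b \<in> V - K" and mixed: "mixed V E b K"
    using prime_graph_mixed_vertex[OF G prime KV] by blast
  consider "b \<in> nbhd V E u \<or> b = u \<or> b = v" | "b \<in> nbhd V E v - nbhd V E u"
    | "b \<notin> nbhd V E v" "b \<noteq> v" "b \<noteq> u"
    by blast
  then show False
  proof cases
    case 1
    have "E b w" if "w \<in> K" for w
      using 1 anticomponent_complete[OF x, where w = w and b = b] that b KN Nu graph_sym[OF G, of w b]
      unfolding K_def by (auto simp: nbhd_def)
    then show False
      using mixed unfolding mixed_def by blast
  next
    case 2
    have "E b q" if "antiadjacent E (nbhd V E u) p q" "E b p" for p q
      using house_free_transfer[OF G coP5 V(2,1) uv, of p q b] that 2 Nu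
      unfolding antiadjacent_def by blast
    then show False
      using anticomponent_not_mixed[OF G] mixed unfolding K_def by blast
  next
    case 3
    then have bv: "\<not> E b v"
      using b graph_sym[OF G, of b v] by (auto simp: nbhd_def)
    have "nbhd V E u \<inter> nbhd V E v = nbhd V E u" "nbhd V E b \<inter> nbhd V E v = nbhd V E b"
      using Nu antisimplicial_nonneighbour_nbhd[OF G anti _ bv] b by blast+
    then have "card (nbhd V E u) \<le> card (nbhd V E b)"
      using min[of b] b 3 bv by simp
    then have "E b q" if "antiadjacent E (nbhd V E u) p q" "E b p" for p q
      using antisimplicial_min_nonneighbour_transfer[OF G P5 coP5 anti V, of b] that b uv bv
      unfolding antiadjacent_def by blast
    then show False
      using anticomponent_not_mixed[OF G] mixed unfolding K_def by blast
  qed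
qed

definition complement :: "'a set \<Rightarrow> ('a \<Rightarrow> 'a \<Rightarrow> bool) \<Rightarrow> 'a \<Rightarrow> 'a \<Rightarrow> bool" where
  "complement V E x y \<longleftrightarrow> x \<in> V \<and> y \<in> V \<and> x \<noteq> y \<and> \<not> E x y"

lemma graph_complement: "graph V E \<Longrightarrow> graph V (complement V E)"
  unfolding graph_def complement_def by auto

lemma complement_complement: "graph V E \<Longrightarrow> complement V (complement V E) = E"
  unfolding graph_def complement_def by (auto intro!: ext)

lemma nbhd_complement: "x \<in> V \<Longrightarrow> nbhd V (complement V E) x = V - nbhd V E x - {x}"
  unfolding nbhd_def complement_def by auto

lemma prime_graph_complement: "prime_graph V (complement V E) \<longleftrightarrow> prime_graph V E"
proof -
  have "mixed V (complement V E) b X \<longleftrightarrow> mixed V E b X" if "X \<subseteq> V" "b \<in> V - X" for b X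
    using that unfolding mixed_def complement_def by blast
  then have "homogeneous V (complement V E) X \<longleftrightarrow> homogeneous V E X" for X
    unfolding homogeneous_def by blast
  then show ?thesis
    unfolding prime_graph_def by simp
qed

lemma induced_P5_complement: "has_induced_P5 V (complement V E) \<longleftrightarrow> has_induced_coP5 V E"
  unfolding has_induced_P5_def has_induced_coP5_def complement_def by (simp cong: conj_cong)

lemma induced_coP5_complement:
  "graph V E \<Longrightarrow> has_induced_coP5 V (complement V E) \<longleftrightarrow> has_induced_P5 V E"
  using induced_P5_complement[of V "complement V E"] by (simp add: complement_complement)

lemma simplicial_complement:
  assumes G: "graph V E" and v: "v \<in> V"
  shows "simplicial V (complement V E) v \<longleftrightarrow> antisimplicial V E v"
proof
  assume simp: "simplicial V (complement V E) v"
  show "antisimplicial V E v"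
    unfolding antisimplicial_def
  proof (intro ballI)
    fix x y
    assume x: "x \<in> V - nbhd V E v" and y: "y \<in> V - nbhd V E v"
    have "\<not> E v x" "\<not> E v y"
      using x y by (auto simp: nbhd_def)
    then have "\<not> E x v"
      using graph_sym[OF G, of x v] by blast
    moreover have "complement V E x y" if "x \<noteq> y" "x \<noteq> v" "y \<noteq> v"
      using simp x y that unfolding simplicial_def nbhd_complement[OF v] by blast
    ultimately show "\<not> E x y"
      using \<open>\<not> E v y\<close> graph_irrefl[OF G, of x] unfolding complement_def by blast
  qed
next
  assume "antisimplicial V E v"
  then show "simplicial V (complement V E) v"
    unfolding simplicial_def antisimplicial_def nbhd_complement[OF v]
    by (auto simp: complement_def)
qed

lemma card_common_nbhd_complement:
  assumes G: "graph V E" and "E w v"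
  shows "card (nbhd V (complement V E) w \<inter> nbhd V (complement V E) v)
    = card V - card (nbhd V E w \<union> nbhd V E v)"
proof -
  have "w \<in> V" "v \<in> V"
    using graph_vertices[OF G assms(2)] by blast+
  then have "nbhd V (complement V E) w \<inter> nbhd V (complement V E) v = V - (nbhd V E w \<union> nbhd V E v)"
    using assms graph_sym[OF G, of w v] unfolding nbhd_complement[OF \<open>w \<in> V\<close>]
      nbhd_complement[OF \<open>v \<in> V\<close>] by (auto simp: nbhd_def)
  moreover have "nbhd V E w \<union> nbhd V E v \<subseteq> V"
    by (auto simp: nbhd_def)
  ultimately show ?thesis
    using card_Diff_subset[OF finite_subset[OF _ graph_finite[OF G]]] by simp
qed

lemma simplicial_max_neighbour_antisimplicial:
  assumes G: "graph V E" and prime: "prime_graph V E"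
    and P5: "\<not> has_induced_P5 V E" and coP5: "\<not> has_induced_coP5 V E"
    and simp: "simplicial V E v" and V: "v \<in> V" "u \<in> V" and uv: "E u v"
    and max: "\<And>w. w \<in> V \<Longrightarrow> E w v \<Longrightarrow>
      card (nbhd V E w \<union> nbhd V E v) \<le> card (nbhd V E u \<union> nbhd V E v)"
  shows "antisimplicial V E u"
proof -
  let ?C = "complement V E"
  have "antisimplicial V ?C v"
    using simplicial_complement[OF graph_complement[OF G] V(1)] simp
    by (simp add: complement_complement[OF G])
  moreover have "\<not> ?C u v"
    using uv by (simp add: complement_def)
  moreover have "card (nbhd V ?C u \<inter> nbhd V ?C v) \<le> card (nbhd V ?C w \<inter> nbhd V ?C v)"
    if "w \<in> V" "w \<noteq> v" "\<not> ?C w v" for w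
  proof -
    have "E w v"
      using that V by (simp add: complement_def)
    then show ?thesis
      using max[OF that(1)] card_common_nbhd_complement[OF G] uv by simp
  qed
  ultimately have "simplicial V ?C u"
    using antisimplicial_min_nonneighbour_simplicial[OF graph_complement[OF G]] V prime P5 coP5
    by (simp add: prime_graph_complement induced_P5_complement induced_coP5_complement[OF G])
  then show ?thesis
    using simplicial_complement[OF G V(2)] by simp
qed

theorem lemma2p9:
  fixes V :: "'a set" and E :: "'a \<Rightarrow> 'a \<Rightarrow> bool" and v :: 'a
  assumes "graph V E"
    and "prime_graph V E"
    and "\<not> has_induced_P5 V E"
    and "\<not> has_induced_coP5 V E"
    and "v \<in> V"
  shows "(antisimplicial V E v \<longrightarrow>
           (\<forall>u. u \<in> V \<and> u \<noteq> v \<and> \<not> E u v \<and>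
              (\<forall>w. w \<in> V \<and> w \<noteq> v \<and> \<not> E w v \<longrightarrow>
                  card (nbhd V E u \<inter> nbhd V E v) \<le> card (nbhd V E w \<inter> nbhd V E v))
              \<longrightarrow> simplicial V E u))
       \<and> (simplicial V E v \<longrightarrow>
           (\<forall>u. u \<in> V \<and> E u v \<and>
              (\<forall>w. w \<in> V \<and> E w v \<longrightarrow>
                  card (nbhd V E w \<union> nbhd V E v) \<le> card (nbhd V E u \<union> nbhd V E v))
              \<longrightarrow> antisimplicial V E u))"
proof (intro conjI impI allI)
  fix u
  assume "antisimplicial V E v"
    and "u \<in> V \<and> u \<noteq> v \<and> \<not> E u v \<and> (\<forall>w. w \<in> V \<and> w \<noteq> v \<and> \<not> E w v \<longrightarrow>
      card (nbhd V E u \<inter> nbhd V E v) \<le> card (nbhd V E w \<inter> nbhd V E v))"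
  then show "simplicial V E u"
    using antisimplicial_min_nonneighbour_simplicial[OF assms(1-4) _ assms(5)] by blast
next
  fix u
  assume "simplicial V E v"
    and "u \<in> V \<and> E u v \<and> (\<forall>w. w \<in> V \<and> E w v \<longrightarrow>
      card (nbhd V E w \<union> nbhd V E v) \<le> card (nbhd V E u \<union> nbhd V E v))"
  then show "antisimplicial V E u"
    using simplicial_max_neighbour_antisimplicial[OF assms(1-4) _ assms(5)] by blast
qed

end
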